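(* Let $\mathcal{H}$ be a real Hilbert space, let $A\colon \mathcal{H}\rightrightarrows\mathcal{H}$ be maximally monotone and $B\colon\mathcal{H}\to\mathcal{H}$ monotone. Let $\alpha\geq0$ and $\beta,\lambda>0$, put $B':=B-\frac{\alpha}{\lambda}I$ and suppose $B'$ is $L'$-Lipschitz. Let $x\in (A+B)^{-1}(0)$ and, given $x_0,x_{-1}\in\mathcal{H}$, let $$z_{k+1} := J_{\lambda A}\Bigl( x_k - \lambda B(x_k) - \frac{\lambda}{\beta}(B'(x_k)- B'(x_{k-1})) \Bigr),\qquad x_{k+1} := (1-\beta) x_k + \beta z_{k+1}\quad\forall k\in\mathbb{N}.$$ Define $b_k:=2\lambda\langle B(x)-B(x_k),x-x_{k}\rangle$ (so $b_k\geq0$). Then for all $k\in\mathbb{N}$, $$(1-\alpha)\|x_{k+1}-x\|^2 +2\lambda\langle B'(x_{k+1})-B'(x_k),x-x_{k+1}\rangle + b_{k+1} \leq (1-\alpha)\|x_k-x\|^2 + 2\lambda\langle B'(x_k)-B'(x_{k-1}),x-x_k\rangle+ b_k +\frac{\lambda L'}{\beta}\|x_k-x_{k-1}\|^2 -\left(\frac{2-\beta-\lambda L'}{\beta}-\alpha \right) \|x_{k+1}-x_k\|^2.$$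
   Context: $J_{\lambda A}:=(I+\lambda A)^{-1}$ denotes the resolvent; $I$ is the identity. *)

theory Defs
  imports "HOL-Analysis.Analysis"
begin

definition monotone_op :: "('a::real_inner \<Rightarrow> 'a set) \<Rightarrow> bool" where
  "monotone_op A \<longleftrightarrow>
     (\<forall>x y u v. u \<in> A x \<longrightarrow> v \<in> A y \<longrightarrow> inner (u - v) (x - y) \<ge> 0)"

definition graph_op :: "('a \<Rightarrow> 'a set) \<Rightarrow> ('a \<times> 'a) set" where
  "graph_op A = {(x, u). u \<in> A x}"

definition maximal_monotone :: "('a::real_inner \<Rightarrow> 'a set) \<Rightarrow> bool" where
  "maximal_monotone A \<longleftrightarrow> monotone_op A \<and>
     (\<forall>A'. monotone_op A' \<and> graph_op A \<subseteq> graph_op A' \<longrightarrow> graph_op A' = graph_op A)"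

text \<open>Resolvent J_{lam A} = (I + lam A)^{-1}, as a set-valued map:
  z \<in> J y iff y \<in> z + lam A z.\<close>
definition resolvent :: "real \<Rightarrow> ('a::real_vector \<Rightarrow> 'a set) \<Rightarrow> 'a \<Rightarrow> 'a set" where
  "resolvent lam A y = {z. y \<in> (\<lambda>a. z + lam *\<^sub>R a) ` A z}"

end

theory Submission
  imports Defs
begin

(* Write w_k for the argument of the resolvent and d = x_{k+1} - x_k, so that z_{k+1} = x_k + d/beta.
   Since -B x is in A x and (w_k - z_{k+1})/lam is in A z_{k+1}, monotonicity of A gives
   M := <w_k - z_{k+1} + lam B x, z_{k+1} - x> >= 0. Expanding all inner products, the right-hand
   side minus the left-hand side of the claimed inequality equals
     2 beta M + 2 lam beta <B x_k - B x, x_k - x>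
       + (lam/beta) (2 <B' x_k - B' x_{k-1}, d> + L' (|x_k - x_{k-1}|^2 + |d|^2)),
   whose second term is nonnegative by monotonicity of B and whose third is nonnegative by
   Cauchy-Schwarz, the Lipschitz bound on B' and 2ab <= a^2 + b^2. The alpha-terms cancel
   exactly. *)

lemma resolvent_monotone_inner_nonneg:
  fixes A :: "'a::real_inner \<Rightarrow> 'a set"
  assumes "monotone_op A" "lam \<ge> 0" "z \<in> resolvent lam A w" "a \<in> A x"
  shows "0 \<le> inner (w - z - lam *\<^sub>R a) (z - x)"
proof -
  obtain c where c: "c \<in> A z" "w = z + lam *\<^sub>R c"
    using assms(3) unfolding resolvent_def by auto
  have "0 \<le> inner (c - a) (z - x)"
    using assms(1,4) c(1) unfolding monotone_op_def by blast
  then have "0 \<le> lam * inner (c - a) (z - x)"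
    using assms(2) by simp
  then show ?thesis
    using c(2) by (simp add: algebra_simps)
qed

lemma lipschitz_on_inner_bound:
  assumes "L-lipschitz_on S f" "u \<in> S" "v \<in> S"
  shows "2 * \<bar>inner (f u - f v) d\<bar> \<le> L * ((norm (u - v))\<^sup>2 + (norm d)\<^sup>2)"
proof -
  have "\<bar>inner (f u - f v) d\<bar> \<le> norm (f u - f v) * norm d"
    by (rule Cauchy_Schwarz_ineq2)
  also have "\<dots> \<le> L * norm (u - v) * norm d"
    using lipschitz_onD[OF assms] by (simp add: dist_norm mult_right_mono)
  finally have "2 * \<bar>inner (f u - f v) d\<bar> \<le> L * (2 * norm (u - v) * norm d)"
    by simp
  also have "\<dots> \<le> L * ((norm (u - v))\<^sup>2 + (norm d)\<^sup>2)"
    using lipschitz_on_nonneg[OF assms(1)] sum_squares_bound[of "norm (u - v)" "norm d"]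
    by (intro mult_left_mono) (auto simp: power2_eq_square)
  finally show ?thesis .
qed

lemma relaxed_step_descent_inequality:
  fixes B :: "'a::real_inner \<Rightarrow> 'a" and \<alpha> lam :: real
  defines "B' \<equiv> \<lambda>u. B u - (\<alpha> / lam) *\<^sub>R u"
  assumes beta: "\<beta> > 0" and lambda: "lam > 0"
    and relax: "xp = (1 - \<beta>) *\<^sub>R xk + \<beta> *\<^sub>R z"
    and A_ineq: "0 \<le> inner (xk - lam *\<^sub>R B xk - (lam / \<beta>) *\<^sub>R (B' xk - B' p) - z + lam *\<^sub>R B x) (z - x)"
    and B_ineq: "0 \<le> inner (B xk - B x) (xk - x)"
    and B'_ineq: "- (2 * inner (B' xk - B' p) (xp - xk)) \<le> L' * ((norm (xk - p))\<^sup>2 + (norm (xp - xk))\<^sup>2)"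
  shows "(1 - \<alpha>) * (norm (xp - x))\<^sup>2
           + 2 * lam * inner (B' xp - B' xk) (x - xp) + 2 * lam * inner (B x - B xp) (x - xp)
         \<le> (1 - \<alpha>) * (norm (xk - x))\<^sup>2
           + 2 * lam * inner (B' xk - B' p) (x - xk) + 2 * lam * inner (B x - B xk) (x - xk)
           + (lam * L' / \<beta>) * (norm (xk - p))\<^sup>2
           - ((2 - \<beta> - lam * L') / \<beta> - \<alpha>) * (norm (xp - xk))\<^sup>2"
proof -
  define e d q u s where "e = xk - x" and "d = xp - xk" and "q = B xk - B x"
    and "u = B' xk - B' p" and "s = xk - p"
  have z: "z = xk + (1 / \<beta>) *\<^sub>R d"
    using beta unfolding d_def relax by (simp add: algebra_simps)
  have A_term: "inner (xk - lam *\<^sub>R B xk - (lam / \<beta>) *\<^sub>R (B' xk - B' p) - z + lam *\<^sub>R B x) (z - x)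
      = inner (- (1 / \<beta>) *\<^sub>R d - lam *\<^sub>R q - (lam / \<beta>) *\<^sub>R u) (e + (1 / \<beta>) *\<^sub>R d)"
    unfolding z e_def q_def u_def by (simp add: algebra_simps)
  have B_terms: "2 * lam * inner (B' xp - B' xk) (x - xp) + 2 * lam * inner (B x - B xp) (x - xp)
      = 2 * lam * inner (q + (\<alpha> / lam) *\<^sub>R d) (e + d)"
    using lambda unfolding B'_def q_def d_def e_def by (simp add: algebra_simps inner_diff)
  have identity: "(1 - \<alpha>) * (norm e)\<^sup>2 - 2 * lam * inner u e + 2 * lam * inner q e
        + (lam * L' / \<beta>) * (norm s)\<^sup>2 - ((2 - \<beta> - lam * L') / \<beta> - \<alpha>) * (norm d)\<^sup>2
      - ((1 - \<alpha>) * (norm (e + d))\<^sup>2 + 2 * lam * inner (q + (\<alpha> / lam) *\<^sub>R d) (e + d))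
    = 2 * \<beta> * inner (- (1 / \<beta>) *\<^sub>R d - lam *\<^sub>R q - (lam / \<beta>) *\<^sub>R u) (e + (1 / \<beta>) *\<^sub>R d)
      + 2 * lam * \<beta> * inner q e + (lam / \<beta>) * (2 * inner u d + L' * ((norm s)\<^sup>2 + (norm d)\<^sup>2))"
    using beta lambda by (simp add: inner_simps power2_norm_eq_inner inner_commute field_simps)
  have A_nonneg: "0 \<le> 2 * \<beta> * inner (- (1 / \<beta>) *\<^sub>R d - lam *\<^sub>R q - (lam / \<beta>) *\<^sub>R u) (e + (1 / \<beta>) *\<^sub>R d)"
    using A_ineq beta unfolding A_term by simp
  have B_nonneg: "0 \<le> 2 * lam * \<beta> * inner q e"
    using B_ineq beta lambda unfolding q_def e_def by simp
  have B'_nonneg: "0 \<le> (lam / \<beta>) * (2 * inner u d + L' * ((norm s)\<^sup>2 + (norm d)\<^sup>2))"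
    using B'_ineq beta lambda unfolding u_def d_def s_def by simp
  have substitutions: "norm (xp - x) = norm (e + d)" "norm (xk - x) = norm e"
    "inner (B' xk - B' p) (x - xk) = - inner u e" "inner (B x - B xk) (x - xk) = inner q e"
    "norm (xk - p) = norm s" "norm (xp - xk) = norm d"
    unfolding e_def d_def q_def u_def s_def by (simp_all add: inner_diff)
  show ?thesis
    unfolding substitutions using identity B_terms A_nonneg B_nonneg B'_nonneg by linarith
qed

theorem lemma4p2:
  fixes A :: "'a::{real_inner, complete_space} \<Rightarrow> 'a set"
    and B :: "'a \<Rightarrow> 'a"
    and \<alpha> \<beta> lam L' :: real
    and x :: 'a
    and xs zs :: "int \<Rightarrow> 'a"
  assumes A_max: "maximal_monotone A"
    and B_mono: "monotone_op (\<lambda>u. {B u})"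
    and alpha: "\<alpha> \<ge> 0" and beta: "\<beta> > 0" and lambda: "lam > 0"
    and B'_lip: "L'-lipschitz_on UNIV (\<lambda>u. B u - (\<alpha> / lam) *\<^sub>R u)"
    and zero: "0 \<in> (\<lambda>a. a + B x) ` A x"
    and z_step: "\<And>k. k \<ge> 0 \<Longrightarrow>
       zs (k + 1) \<in> resolvent lam A
         (xs k - lam *\<^sub>R B (xs k)
            - (lam / \<beta>) *\<^sub>R ((B (xs k) - (\<alpha> / lam) *\<^sub>R xs k)
                            - (B (xs (k - 1)) - (\<alpha> / lam) *\<^sub>R xs (k - 1))))"
    and x_step: "\<And>k. k \<ge> 0 \<Longrightarrow> xs (k + 1) = (1 - \<beta>) *\<^sub>R xs k + \<beta> *\<^sub>R zs (k + 1)"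
    and k: "k \<ge> (0::int)"
  shows "let B' = (\<lambda>u. B u - (\<alpha> / lam) *\<^sub>R u);
             b = (\<lambda>j. 2 * lam * inner (B x - B (xs j)) (x - xs j))
         in (1 - \<alpha>) * (norm (xs (k + 1) - x))\<^sup>2
              + 2 * lam * inner (B' (xs (k + 1)) - B' (xs k)) (x - xs (k + 1)) + b (k + 1)
            \<le> (1 - \<alpha>) * (norm (xs k - x))\<^sup>2
              + 2 * lam * inner (B' (xs k) - B' (xs (k - 1))) (x - xs k) + b k
              + (lam * L' / \<beta>) * (norm (xs k - xs (k - 1)))\<^sup>2
              - ((2 - \<beta> - lam * L') / \<beta> - \<alpha>) * (norm (xs (k + 1) - xs k))\<^sup>2"
proof -
  define B' where "B' = (\<lambda>u. B u - (\<alpha> / lam) *\<^sub>R u)"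
  have A_mono: "monotone_op A"
    using A_max unfolding maximal_monotone_def by blast
  have minus_Bx: "- B x \<in> A x"
    using zero by (auto simp: add_eq_0_iff2)
  have A_ineq: "0 \<le> inner (xs k - lam *\<^sub>R B (xs k) - (lam / \<beta>) *\<^sub>R (B' (xs k) - B' (xs (k - 1)))
      - zs (k + 1) + lam *\<^sub>R B x) (zs (k + 1) - x)"
    using resolvent_monotone_inner_nonneg[OF A_mono _ z_step[OF k] minus_Bx] lambda
    unfolding B'_def by simp
  have B_ineq: "0 \<le> inner (B (xs k) - B x) (xs k - x)"
    using B_mono unfolding monotone_op_def by blast
  have B'_ineq: "- (2 * inner (B' (xs k) - B' (xs (k - 1))) (xs (k + 1) - xs k))
      \<le> L' * ((norm (xs k - xs (k - 1)))\<^sup>2 + (norm (xs (k + 1) - xs k))\<^sup>2)"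
    using lipschitz_on_inner_bound[OF B'_lip[folded B'_def] UNIV_I UNIV_I] by (smt (verit))
  show ?thesis
    using relaxed_step_descent_inequality[OF beta lambda x_step[OF k] A_ineq[unfolded B'_def] B_ineq
        B'_ineq[unfolded B'_def]]
    by (simp add: Let_def)
qed

end
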